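(* Let $C_1,C_2$ be two vertex-disjoint cycles in a graph, and let $P_1,P_2$ be two vertex-disjoint paths from $C_1$ to $C_2$, where $P_i$ has end-vertices $x_i\in V(C_1)$ and $y_i\in V(C_2)$ for $i=1,2$. If $x_1,x_2$ are mod-non-diagonal in $C_1$ and $y_1,y_2$ are mod-non-diagonal in $C_2$, then $C_1\cup C_2\cup P_1\cup P_2$ contains a cycle of length congruent to $1$ modulo $3$.
   Context: A path from a subgraph $X$ to a subgraph $Y$ is a path whose origin lies in $X$, whose terminus lies in $Y$, and all of whose internal vertices lie outside $X\cup Y$. For a cycle $C$ with an orientation, $\overrightarrow{C}[u,v]$ is the path from $u$ to $v$ along the orientation; two distinct vertices $u,v$ of $C$ are mod-diagonal in $C$ if $|\overrightarrow{C}[u,v]|\equiv|\overrightarrow{C}[v,u]|\pmod 3$ (lengths counted in edges), and mod-non-diagonal otherwise (this does not depend on the chosen orientation). *)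

theory Defs
  imports Main
begin

text \<open>A cycle is a list of at least 3 distinct
  vertices, consecutive ones adjacent and the last adjacent to the first;
  its length (number of edges) is the length of the list.\<close>

definition simple_graph :: "'a set set \<Rightarrow> bool" where
  "simple_graph E \<longleftrightarrow> (\<forall>e\<in>E. card e = 2)"

definition path_edges :: "'a list \<Rightarrow> 'a set set" where
  "path_edges xs = {{xs ! i, xs ! Suc i} | i. Suc i < length xs}"

definition cycle_edges :: "'a list \<Rightarrow> 'a set set" where
  "cycle_edges xs = path_edges xs \<union> {{last xs, hd xs}}"

definition is_path :: "'a set set \<Rightarrow> 'a list \<Rightarrow> bool" where
  "is_path E xs \<longleftrightarrow> xs \<noteq> [] \<and> distinct xs \<and> path_edges xs \<subseteq> E"

definition is_cycle :: "'a set set \<Rightarrow> 'a list \<Rightarrow> bool" where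
  "is_cycle E xs \<longleftrightarrow> length xs \<ge> 3 \<and> distinct xs \<and> cycle_edges xs \<subseteq> E"

definition path_from_to :: "'a set set \<Rightarrow> 'a list \<Rightarrow> 'a set \<Rightarrow> 'a set \<Rightarrow> bool" where
  "path_from_to E P X Y \<longleftrightarrow> is_path E P \<and> hd P \<in> X \<and> last P \<in> Y \<and>
     (\<forall>i. 0 < i \<and> i < length P - 1 \<longrightarrow> P ! i \<notin> X \<union> Y)"

definition pos :: "'a list \<Rightarrow> 'a \<Rightarrow> nat" where
  "pos C u = (THE i. i < length C \<and> C ! i = u)"

text \<open>Length of the oriented subpath C[u,v] of the cycle C (oriented along the list).\<close>
definition cyc_dist :: "'a list \<Rightarrow> 'a \<Rightarrow> 'a \<Rightarrow> int" where
  "cyc_dist C u v = (int (pos C v) - int (pos C u)) mod int (length C)"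

definition mod_diagonal :: "'a list \<Rightarrow> 'a \<Rightarrow> 'a \<Rightarrow> bool" where
  "mod_diagonal C u v \<longleftrightarrow> u \<in> set C \<and> v \<in> set C \<and> u \<noteq> v \<and>
     cyc_dist C u v mod 3 = cyc_dist C v u mod 3"

definition mod_non_diagonal :: "'a list \<Rightarrow> 'a \<Rightarrow> 'a \<Rightarrow> bool" where
  "mod_non_diagonal C u v \<longleftrightarrow> u \<in> set C \<and> v \<in> set C \<and> u \<noteq> v \<and>
     \<not> cyc_dist C u v mod 3 = cyc_dist C v u mod 3"

end

theory Submission imports Defs begin

text \<open>Between the two attachment points, each cycle splits into two arcs, and mod-non-diagonality
  says that their lengths differ modulo 3. Going along an arc of \<open>C\<^sub>1\<close>, then \<open>P\<^sub>1\<close>, an arc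
  of \<open>C\<^sub>2\<close> and back along \<open>P\<^sub>2\<close> gives a cycle whose length is the sum of the two arc lengths
  plus a constant. Since the sumset of two 2-element subsets of \<open>\<int>/3\<close> is all of \<open>\<int>/3\<close>, one of
  the four choices of arcs gives a cycle of length \<open>1 mod 3\<close>.\<close>

lemma path_edges_Nil [simp]: "path_edges [] = {}"
  by (simp add: path_edges_def)

lemma path_edges_singleton [simp]: "path_edges [x] = {}"
  by (simp add: path_edges_def)

lemma path_edges_Cons_Cons [simp]: "path_edges (x # y # xs) = insert {x, y} (path_edges (y # xs))"
  unfolding path_edges_def by (auto simp: less_Suc_eq_0_disj) (metis nth_Cons_0 nth_Cons_Suc)+

lemma path_edges_Cons: "ys \<noteq> [] \<Longrightarrow> path_edges (x # ys) = insert {x, hd ys} (path_edges ys)"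
  by (cases ys) auto

lemma path_edges_append:
  "xs \<noteq> [] \<Longrightarrow> ys \<noteq> [] \<Longrightarrow>
    path_edges (xs @ ys) = path_edges xs \<union> path_edges ys \<union> {{last xs, hd ys}}"
proof (induction xs rule: induct_list012)
  case (2 x)
  then show ?case by (cases ys) auto
next
  case (3 x y zs)
  then show ?case by auto
qed simp

lemma path_edges_rev [simp]: "path_edges (rev xs) = path_edges xs"
proof (induction xs)
  case (Cons x xs)
  show ?case
  proof (cases xs)
    case (Cons a as)
    then have "path_edges (rev (x # xs)) = path_edges xs \<union> {{a, x}}"
      using Cons.IH path_edges_append[of "rev xs" "[x]"] by (simp add: last_rev)
    then show ?thesis using Cons by (auto simp: insert_commute)
  qed simp
qed simp

lemma path_edges_take_subset: "path_edges (take n xs) \<subseteq> path_edges xs"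
  unfolding path_edges_def by auto

lemma path_edges_subset_cycle_edges: "path_edges xs \<subseteq> cycle_edges xs"
  by (auto simp: cycle_edges_def)

lemma cycle_edges_rotate1 [simp]: "cycle_edges (rotate1 xs) = cycle_edges xs"
proof (cases xs)
  case (Cons x ys)
  show ?thesis
  proof (cases ys)
    case (Cons a as)
    have "cycle_edges (rotate1 xs) = path_edges ys \<union> {{last ys, x}} \<union> {{x, a}}"
      using Cons \<open>xs = x # ys\<close> path_edges_append[of ys "[x]"] by (simp add: cycle_edges_def)
    moreover have "cycle_edges xs = insert {x, a} (path_edges ys) \<union> {{last ys, x}}"
      using Cons \<open>xs = x # ys\<close> by (simp add: cycle_edges_def)
    ultimately show ?thesis by auto
  qed (simp add: Cons)
qed simp

lemma cycle_edges_rotate [simp]: "cycle_edges (rotate n xs) = cycle_edges xs"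
  by (induction n) simp_all

lemma two_le_length_if_hd_neq_last: "xs \<noteq> [] \<Longrightarrow> hd xs \<noteq> last xs \<Longrightarrow> 2 \<le> length xs"
  by (cases xs; cases "tl xs") auto

lemma path_join:
  assumes "xs \<noteq> []" "ys \<noteq> []" "distinct xs" "distinct ys" "last xs = hd ys"
    and "set xs \<inter> set ys \<subseteq> {hd ys}"
  shows "distinct (xs @ tl ys)" "set (xs @ tl ys) = set xs \<union> set ys"
    "path_edges (xs @ tl ys) = path_edges xs \<union> path_edges ys"
    "length (xs @ tl ys) + 1 = length xs + length ys"
    "hd (xs @ tl ys) = hd xs" "last (xs @ tl ys) = last ys"
proof -
  obtain y ys' where ys: "ys = y # ys'" using assms(2) by (cases ys) auto
  have "y \<in> set xs" using assms(1,5) ys by (metis last_in_set list.sel(1))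
  then show "distinct (xs @ tl ys)" "set (xs @ tl ys) = set xs \<union> set ys"
    using assms(3,4,6) ys by auto
  show "length (xs @ tl ys) + 1 = length xs + length ys" "hd (xs @ tl ys) = hd xs"
    using assms(1) ys by auto
  show "last (xs @ tl ys) = last ys" "path_edges (xs @ tl ys) = path_edges xs \<union> path_edges ys"
    using assms(1,5) ys path_edges_append[of xs ys'] by (cases ys'; auto simp: path_edges_Cons)+
qed

lemma cycle_of_two_paths:
  assumes "W \<noteq> []" "distinct W" "distinct R" "2 \<le> length R"
    and "hd R = last W" "last R = hd W" "set W \<inter> set R = {hd W, last W}"
  shows "distinct (W @ butlast (tl R))"
    "cycle_edges (W @ butlast (tl R)) = path_edges W \<union> path_edges R"
    "length (W @ butlast (tl R)) + 2 = length W + length R"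
proof -
  obtain a M b where R: "R = a # M @ [b]"
    using assms(4) by (cases R; cases "tl R" rule: rev_cases) auto
  have ab: "a = last W" "b = hd W" using R assms(5,6) by auto
  have "x \<notin> set W" if "x \<in> set M" for x
  proof
    assume "x \<in> set W"
    then have "x \<in> {hd W, last W}" using that assms(7) R by auto
    then show False using that assms(3) R ab by auto
  qed
  then have "set M \<inter> set W = {}" by blast
  then show "distinct (W @ butlast (tl R))" using assms(2,3) R by auto
  show "length (W @ butlast (tl R)) + 2 = length W + length R" using R by simp
  show "cycle_edges (W @ butlast (tl R)) = path_edges W \<union> path_edges R"
  proof (cases "M = []")
    case True
    then show ?thesis using R ab by (auto simp: cycle_edges_def)
  next
    case False
    have "path_edges R = insert {a, hd M} (path_edges M \<union> {{last M, b}})"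
      using R False path_edges_Cons[of "M @ [b]" a] path_edges_append[of M "[b]"] by simp
    moreover have "cycle_edges (W @ M) =
        path_edges W \<union> path_edges M \<union> {{last W, hd M}} \<union> {{last M, hd W}}"
      using False assms(1) path_edges_append[of W M] by (simp add: cycle_edges_def)
    ultimately show ?thesis using R ab by auto
  qed
qed

lemma set_path_from_to_inter:
  assumes "path_from_to E P X Y"
  shows "set P \<inter> (X \<union> Y) \<subseteq> {hd P, last P}"
proof
  fix z assume z: "z \<in> set P \<inter> (X \<union> Y)"
  then obtain i where i: "i < length P" "P ! i = z" by (meson IntD1 in_set_conv_nth)
  have "\<not> (0 < i \<and> i < length P - 1)"
    using assms z i unfolding path_from_to_def by auto
  then have "i = 0 \<or> i = length P - 1" using i by linarith
  moreover have "P \<noteq> []" using i(1) by auto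
  ultimately show "z \<in> {hd P, last P}"
    using i(2) by (auto simp: hd_conv_nth last_conv_nth)
qed

lemma pos_less_length: "distinct C \<Longrightarrow> u \<in> set C \<Longrightarrow> pos C u < length C"
  and nth_pos: "distinct C \<Longrightarrow> u \<in> set C \<Longrightarrow> C ! pos C u = u"
  unfolding pos_def using theI'[OF distinct_Ex1[of C u]] by auto

definition cycle_arc :: "'a list \<Rightarrow> 'a \<Rightarrow> 'a \<Rightarrow> 'a list \<Rightarrow> bool" where
  "cycle_arc C u v A \<longleftrightarrow> A \<noteq> [] \<and> distinct A \<and> hd A = u \<and> last A = v \<and>
     set A \<subseteq> set C \<and> path_edges A \<subseteq> cycle_edges C"

lemma cycle_arc_rev: "cycle_arc C u v A \<Longrightarrow> cycle_arc C v u (rev A)"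
  by (simp add: cycle_arc_def hd_rev last_rev)

definition arc :: "'a list \<Rightarrow> 'a \<Rightarrow> 'a \<Rightarrow> 'a list" where
  "arc C u v = take (nat (cyc_dist C u v) + 1) (rotate (pos C u) C)"

lemma
  assumes "distinct C" "u \<in> set C" "v \<in> set C" "u \<noteq> v"
  shows cycle_arc_arc: "cycle_arc C u v (arc C u v)"
    and length_arc: "int (length (arc C u v)) = cyc_dist C u v + 1"
proof -
  define L where "L = length C"
  define k where "k = nat (cyc_dist C u v)"
  let ?R = "rotate (pos C u) C"
  have pu: "pos C u < L" "C ! pos C u = u"
    using pos_less_length[OF assms(1,2)] nth_pos[OF assms(1,2)] L_def by simp_all
  have pv: "pos C v < L" "C ! pos C v = v"
    using pos_less_length[OF assms(1,3)] nth_pos[OF assms(1,3)] L_def by simp_all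
  have "0 < L" using pu(1) by simp
  have k: "int k = (int (pos C v) - int (pos C u)) mod int L"
    unfolding k_def cyc_dist_def L_def using \<open>0 < L\<close> L_def by simp
  then have "int k < int L" using \<open>0 < L\<close> by simp
  then have "k < L" by simp
  have "int ((pos C u + k) mod L) = (int (pos C u) + int k) mod int L" by (simp add: zmod_int)
  also have "\<dots> = int (pos C v)" using k pv(1) by (simp add: mod_add_right_eq)
  finally have "(pos C u + k) mod L = pos C v" by simp
  then have Rk: "?R ! k = v" using nth_rotate[of k C "pos C u"] pv(2) \<open>k < L\<close> L_def by simp
  have R0: "?R ! 0 = u" using nth_rotate[of 0 C "pos C u"] pu \<open>0 < L\<close> L_def by simp
  have arc: "arc C u v = take (Suc k) ?R" unfolding arc_def k_def by simp
  have len: "length (arc C u v) = Suc k" using arc \<open>k < L\<close> L_def by simp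
  then show "int (length (arc C u v)) = cyc_dist C u v + 1"
    using k by (simp add: cyc_dist_def L_def)
  have "hd (arc C u v) = u" using arc R0 \<open>0 < L\<close> L_def by (simp add: hd_conv_nth)
  moreover have "last (arc C u v) = v"
    using arc Rk \<open>k < L\<close> L_def by (simp add: take_Suc_conv_app_nth)
  moreover have "path_edges (arc C u v) \<subseteq> cycle_edges C"
    using arc path_edges_take_subset[of "Suc k" ?R] path_edges_subset_cycle_edges[of ?R] by simp
  ultimately show "cycle_arc C u v (arc C u v)"
    unfolding cycle_arc_def using arc len assms(1) set_take_subset[of "Suc k" ?R] by auto
qed

lemma mod_non_diagonal_arcs:
  assumes "distinct C" "mod_non_diagonal C u v"
  obtains A B where "cycle_arc C u v A" "cycle_arc C u v B" "length A mod 3 \<noteq> length B mod 3"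
proof
  have uv: "u \<in> set C" "v \<in> set C" "u \<noteq> v" "cyc_dist C u v mod 3 \<noteq> cyc_dist C v u mod 3"
    using assms(2) by (auto simp: mod_non_diagonal_def)
  show "cycle_arc C u v (arc C u v)" "cycle_arc C u v (rev (arc C v u))"
    using cycle_arc_arc[OF assms(1) uv(1-3)] cycle_arc_arc[OF assms(1) uv(2,1) uv(3)[symmetric]]
    by (simp_all add: cycle_arc_rev)
  have shift: "x mod 3 = ((x + 1) mod 3 - 1) mod 3" for x :: int
    by (simp add: mod_diff_left_eq)
  have "(cyc_dist C u v + 1) mod 3 \<noteq> (cyc_dist C v u + 1) mod 3"
    using uv(4) shift[of "cyc_dist C u v"] shift[of "cyc_dist C v u"] by metis
  then have "int (length (arc C u v)) mod 3 \<noteq> int (length (arc C v u)) mod 3"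
    using length_arc[OF assms(1) uv(1-3)] length_arc[OF assms(1) uv(2,1) uv(3)[symmetric]]
    by simp
  then show "length (arc C u v) mod 3 \<noteq> length (rev (arc C v u)) mod 3"
    by (metis length_rev of_nat_mod of_nat_numeral)
qed

lemma mod_3_sumset:
  fixes a b c d t :: nat
  assumes "a mod 3 \<noteq> b mod 3" "c mod 3 \<noteq> d mod 3"
  shows "\<exists>m\<in>{a, b}. \<exists>n\<in>{c, d}. (m + n) mod 3 = t mod 3"
proof -
  have less_3_cases: "n = 0 \<or> n = 1 \<or> n = 2" if "n < 3" for n :: nat
    using that by auto
  have "\<exists>m\<in>{A, B}. \<exists>n\<in>{C, D}. (m + n) mod 3 = T"
    if "A < 3" "B < 3" "C < 3" "D < 3" "T < 3" "A \<noteq> B" "C \<noteq> D" for A B C D T :: nat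
    using less_3_cases[OF that(1)] less_3_cases[OF that(2)] less_3_cases[OF that(3)]
      less_3_cases[OF that(4)] less_3_cases[OF that(5)] that(6,7)
    by (elim disjE) simp_all
  from this[of "a mod 3" "b mod 3" "c mod 3" "d mod 3" "t mod 3"] show ?thesis
    using assms by (auto simp: mod_add_eq)
qed

lemma cycle_through_arcs_and_paths:
  assumes C12: "set C1 \<inter> set C2 = {}"
    and P1: "path_from_to E P1 (set C1) (set C2)" and P2: "path_from_to E P2 (set C1) (set C2)"
    and P12: "set P1 \<inter> set P2 = {}"
    and A1: "cycle_arc C1 (hd P2) (hd P1) A1" and A2: "cycle_arc C2 (last P1) (last P2) A2"
  obtains D where "is_cycle (cycle_edges C1 \<union> cycle_edges C2 \<union> path_edges P1 \<union> path_edges P2) D"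
    "length D + 4 = length A1 + length A2 + length P1 + length P2"
proof
  have ends: "hd P1 \<in> set C1" "last P1 \<in> set C2" "hd P2 \<in> set C1" "last P2 \<in> set C2"
    and P: "P1 \<noteq> []" "distinct P1" "P2 \<noteq> []" "distinct P2"
    using P1 P2 by (auto simp: path_from_to_def is_path_def)
  have P1_C: "set P1 \<inter> set C1 \<subseteq> {hd P1}" "set P1 \<inter> set C2 \<subseteq> {last P1}"
    using set_path_from_to_inter[OF P1] ends C12 by auto
  have P2_C: "set P2 \<inter> set C1 \<subseteq> {hd P2}" "set P2 \<inter> set C2 \<subseteq> {last P2}"
    using set_path_from_to_inter[OF P2] ends C12 by auto
  have A: "A1 \<noteq> []" "distinct A1" "hd A1 = hd P2" "last A1 = hd P1" "set A1 \<subseteq> set C1"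
    "path_edges A1 \<subseteq> cycle_edges C1"
    "A2 \<noteq> []" "distinct A2" "hd A2 = last P1" "last A2 = last P2" "set A2 \<subseteq> set C2"
    "path_edges A2 \<subseteq> cycle_edges C2"
    using A1 A2 by (auto simp: cycle_arc_def)
  have "last P1 \<noteq> last P2" using P P12 by (metis disjoint_iff last_in_set)
  then have lengths: "2 \<le> length P1" "2 \<le> length P2" "1 \<le> length A1" "2 \<le> length A2"
    using ends P A C12 by (auto intro!: two_le_length_if_hd_neq_last simp: Suc_le_eq)
  define W1 where "W1 = A1 @ tl P1"
  have W1: "distinct W1" "set W1 = set A1 \<union> set P1" "path_edges W1 = path_edges A1 \<union> path_edges P1"
    "length W1 + 1 = length A1 + length P1" "hd W1 = hd P2" "last W1 = last P1"
  proof -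
    have "set A1 \<inter> set P1 \<subseteq> {hd P1}" using A(5) P1_C(1) by auto
    then show "distinct W1" "set W1 = set A1 \<union> set P1"
      "path_edges W1 = path_edges A1 \<union> path_edges P1"
      "length W1 + 1 = length A1 + length P1" "hd W1 = hd P2" "last W1 = last P1"
      unfolding W1_def using path_join[OF A(1) P(1) A(2) P(2) A(4)] A(3) by auto
  qed
  define W where "W = W1 @ tl A2"
  have W: "distinct W" "set W = set A1 \<union> set P1 \<union> set A2"
    "path_edges W = path_edges A1 \<union> path_edges P1 \<union> path_edges A2"
    "length W + 1 = length W1 + length A2" "hd W = hd P2" "last W = last P2"
  proof -
    have "set W1 \<inter> set A2 \<subseteq> {hd A2}" using W1(2) A(5,9,11) P1_C(2) C12 by auto
    moreover have "W1 \<noteq> []" using W1(4) lengths by auto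
    ultimately show "distinct W" "set W = set A1 \<union> set P1 \<union> set A2"
      "path_edges W = path_edges A1 \<union> path_edges P1 \<union> path_edges A2"
      "length W + 1 = length W1 + length A2" "hd W = hd P2" "last W = last P2"
      unfolding W_def using path_join[OF _ A(7) W1(1) A(8)] W1 A(9,10) by auto
  qed
  have "W \<noteq> []" using W(4) lengths by auto
  have "hd P2 \<in> set A1" "last P2 \<in> set A2"
    using A(1,3,7,10) by (metis hd_in_set, metis last_in_set)
  then have WR: "set W \<inter> set (rev P2) = {hd W, last W}"
    using W(2,5,6) A(5,11) P P2_C P12 by auto
  have R: "distinct (rev P2)" "2 \<le> length (rev P2)" "hd (rev P2) = last W" "last (rev P2) = hd W"
    using P(3,4) lengths(2) W(5,6) by (simp_all add: hd_rev last_rev)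
  note D = cycle_of_two_paths[OF \<open>W \<noteq> []\<close> W(1) R WR, unfolded path_edges_rev length_rev]
  show "length (W @ butlast (tl (rev P2))) + 4 = length A1 + length A2 + length P1 + length P2"
    using D(3) W(4) W1(4) by linarith
  then show "is_cycle (cycle_edges C1 \<union> cycle_edges C2 \<union> path_edges P1 \<union> path_edges P2)
      (W @ butlast (tl (rev P2)))"
    unfolding is_cycle_def using D(1,2) W(3) A(6,12) lengths by auto
qed

theorem lemma2p4:
  fixes E :: "'a set set" and C1 C2 P1 P2 :: "'a list" and x1 x2 y1 y2 :: 'a
  assumes "simple_graph E"
    and "is_cycle E C1" and "is_cycle E C2" and "set C1 \<inter> set C2 = {}"
    and "path_from_to E P1 (set C1) (set C2)" and "path_from_to E P2 (set C1) (set C2)"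
    and "set P1 \<inter> set P2 = {}"
    and "hd P1 = x1" and "last P1 = y1" and "hd P2 = x2" and "last P2 = y2"
    and "mod_non_diagonal C1 x1 x2" and "mod_non_diagonal C2 y1 y2"
  shows "\<exists>D. is_cycle (cycle_edges C1 \<union> cycle_edges C2 \<union> path_edges P1 \<union> path_edges P2) D
             \<and> length D mod 3 = 1"
proof -
  have "distinct C1" "distinct C2" using assms(2,3) by (simp_all add: is_cycle_def)
  have "mod_non_diagonal C1 (hd P2) (hd P1)" "mod_non_diagonal C2 (last P1) (last P2)"
    using assms(8-13) by (auto simp: mod_non_diagonal_def)
  obtain A A' where A: "cycle_arc C1 (hd P2) (hd P1) A" "cycle_arc C1 (hd P2) (hd P1) A'"
    "length A mod 3 \<noteq> length A' mod 3"
    using mod_non_diagonal_arcs[OF \<open>distinct C1\<close> \<open>mod_non_diagonal C1 (hd P2) (hd P1)\<close>] .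
  obtain B B' where B: "cycle_arc C2 (last P1) (last P2) B" "cycle_arc C2 (last P1) (last P2) B'"
    "length B mod 3 \<noteq> length B' mod 3"
    using mod_non_diagonal_arcs[OF \<open>distinct C2\<close> \<open>mod_non_diagonal C2 (last P1) (last P2)\<close>] .
  define p where "p = length P1 + length P2"
  \<comment> \<open>\<open>2 + 2 p \<equiv> 2 - p\<close>, so that the cycle below has \<open>length D + 4 \<equiv> 2 (mod 3)\<close>\<close>
  have "\<exists>A1\<in>{A, A'}. \<exists>A2\<in>{B, B'}. (length A1 + length A2) mod 3 = (2 + 2 * p) mod 3"
    using mod_3_sumset[OF A(3) B(3)] by simp
  then obtain A1 A2 where A1: "cycle_arc C1 (hd P2) (hd P1) A1"
    and A2: "cycle_arc C2 (last P1) (last P2) A2"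
    and mod3: "(length A1 + length A2) mod 3 = (2 + 2 * p) mod 3"
    using A(1,2) B(1,2) by blast
  obtain D where cycle: "is_cycle (cycle_edges C1 \<union> cycle_edges C2 \<union> path_edges P1 \<union> path_edges P2) D"
    and "length D + 4 = length A1 + length A2 + length P1 + length P2"
    using cycle_through_arcs_and_paths[OF assms(4-7) A1 A2] .
  then have "length D + 4 = length A1 + length A2 + p" by (simp add: p_def)
  with mod3 have "(length D + 4) mod 3 = (2 + 2 * p + p) mod 3" by (metis mod_add_left_eq)
  then have "length D mod 3 = 1" by presburger
  with cycle show ?thesis by blast
qed

end
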